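(* Let $X_1, X_2, \dots$ be i.i.d. random variables with $\mathbb{P}(X_1 = l) = p_l$ for $l \in \mathbb{Z}^+$. Fix integers $k \ge 1$, $0 \le j \le k$ and $i_0 \in \mathbb{Z}^+$. For $i \ge 1$ let $\xi_i$ be the indicator of the event that $X_{i+k} = i_0$ and exactly $j$ of $X_i, X_{i+1}, \dots, X_{i+k-1}$ are $\ge i_0$. Then: (1) for every $i \ge 1$, $\mathbb{E}(\xi_i) = \mathbb{P}(\xi_i = 1) = \binom{k}{j} S_{i_0}^j (1-S_{i_0})^{k-j} p_{i_0}$; (2) for every $i \ge 1$, $\mathbb{E}(\xi_i \xi_{i+1}) = \binom{k-1}{j-1} S_{i_0}^{j} (1-S_{i_0})^{k-j} p_{i_0}^2$; (3) for $i_1, i_2 \ge 1$ with $|i_1 - i_2| = m > k$, $\mathbb{P}(\xi_{i_1} = 1, \xi_{i_2} = 1) = \mathbb{P}(\xi_{i_1} = 1)\mathbb{P}(\xi_{i_2} = 1)$ and $\mathbb{E}(\xi_{i_1}\xi_{i_2}) = \mathbb{E}(\xi_{i_1})\mathbb{E}(\xi_{i_2})$; (4) for $i_1, i_2 \ge 1$ with $|i_1 - i_2| = m \in \{1, 2, \dots, k\}$, \[ \phi_m := \mathbb{E}(\xi_{i_1}\xi_{i_2}) = \sum_{t=\max\{0, j-m-1\}}^{\min\{k-m, j-1\}} \binom{m}{j-t}\binom{m-1}{j-t-1}\binom{k-m}{t} S_{i_0}^{2j-t-1} (1-S_{i_0})^{m-2j+t+k} p_{i_0}^2 . \]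
   Context: $S_{i_0} = \mathbb{P}(X_1 \ge i_0) = \sum_{s \ge i_0} p_s$. Binomial coefficients $\binom{a}{b}$ are taken to be $0$ when $b < 0$ or $b > a$, an empty sum is $0$, and $0^0 = 1$. *)

theory Defs
  imports "HOL-Probability.Probability"
begin

definition tailS :: "(nat \<Rightarrow> real) \<Rightarrow> nat \<Rightarrow> real" where
  "tailS p i0 = (\<Sum>s. p (s + i0))"

definition binom_int :: "int \<Rightarrow> int \<Rightarrow> real" where
  "binom_int a b = (if b < 0 \<or> a < 0 then 0 else real (nat a choose nat b))"

definition xi :: "(nat \<Rightarrow> 'a \<Rightarrow> nat) \<Rightarrow> nat \<Rightarrow> nat \<Rightarrow> nat \<Rightarrow> nat \<Rightarrow> 'a \<Rightarrow> real" where
  "xi X k j i0 i \<omega> =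
     (if X (i + k) \<omega> = i0 \<and> card {l \<in> {i..<i + k}. i0 \<le> X l \<omega>} = j then 1 else 0)"

end

theory Submission
  imports Defs
begin

(* Every event in question fixes X_v = i0 at the right end v of one or two windows and asks
   which positions of the rest of the window(s) carry a value >= i0.  By independence, the
   pattern "values >= i0 exactly on T \<subseteq> U, and X_v = i0 for v \<in> V" has probability
   S^|T| (1 - S)^(|U| - |T|) p_i0^|V|, so each probability is a weighted count of admissible
   sets T.  Windows more than k apart are disjoint and their counts multiply.  For windows at
   distance m \<le> k, the right end a + k of the first window lies inside the second one and is
   an exceedance there; splitting the union of the windows into the part A only in the first,
   the overlap Q and the part B only in the second, the admissible T are those with
   |T \<inter> (A \<union> Q)| = j and |T \<inter> (Q \<union> B)| = j - 1, and grouping them by t = |T \<inter> Q| gives the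
   binomial sum phi_m. *)

lemma card_subsets_Un_disjoint:
  assumes "A \<inter> B = {}"
  shows "card {T. T \<subseteq> A \<union> B \<and> P (T \<inter> A) \<and> Q (T \<inter> B)}
    = card {T. T \<subseteq> A \<and> P T} * card {T. T \<subseteq> B \<and> Q T}"
proof -
  have parts: "(T1 \<union> T2) \<inter> A = T1" "(T1 \<union> T2) \<inter> B = T2" if "T1 \<subseteq> A" "T2 \<subseteq> B" for T1 T2
    using that assms by auto
  have "bij_betw (\<lambda>(T1, T2). T1 \<union> T2) ({T. T \<subseteq> A \<and> P T} \<times> {T. T \<subseteq> B \<and> Q T})
      {T. T \<subseteq> A \<union> B \<and> P (T \<inter> A) \<and> Q (T \<inter> B)}"
    by (rule bij_betwI[where g = "\<lambda>T. (T \<inter> A, T \<inter> B)"]) (use assms in \<open>auto simp: parts\<close>)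
  then have "card {T. T \<subseteq> A \<union> B \<and> P (T \<inter> A) \<and> Q (T \<inter> B)}
      = card ({T. T \<subseteq> A \<and> P T} \<times> {T. T \<subseteq> B \<and> Q T})"
    by (rule bij_betw_same_card[symmetric])
  then show ?thesis
    by (simp only: card_cartesian_product)
qed

lemma card_subsets_card_Int3:
  assumes "finite A" "finite Q" "finite B" "A \<inter> Q = {}" "A \<inter> B = {}" "Q \<inter> B = {}"
  shows "card {T. T \<subseteq> A \<union> Q \<union> B \<and> card (T \<inter> A) = a \<and> card (T \<inter> Q) = b \<and> card (T \<inter> B) = c}
    = (card A choose a) * (card Q choose b) * (card B choose c)"
proof -
  have "(A \<union> Q) \<inter> B = {}" using assms by auto
  from card_subsets_Un_disjoint[OF this, of "\<lambda>T. card (T \<inter> A) = a \<and> card (T \<inter> Q) = b" "\<lambda>T. card T = c"]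
  have "card {T. T \<subseteq> A \<union> Q \<union> B \<and> card (T \<inter> A) = a \<and> card (T \<inter> Q) = b \<and> card (T \<inter> B) = c}
      = card {T. T \<subseteq> A \<union> Q \<and> card (T \<inter> A) = a \<and> card (T \<inter> Q) = b} * (card B choose c)"
    using assms by (simp add: Int_assoc Int_absorb2 n_subsets Un_Int_distrib2 cong: conj_cong)
  also have "card {T. T \<subseteq> A \<union> Q \<and> card (T \<inter> A) = a \<and> card (T \<inter> Q) = b}
      = (card A choose a) * (card Q choose b)"
    using card_subsets_Un_disjoint[OF \<open>A \<inter> Q = {}\<close>, of "\<lambda>T. card T = a" "\<lambda>T. card T = b"] assms
    by (simp add: n_subsets)
  finally show ?thesis .
qed

lemma card_Int_Un_disjoint:
  assumes "finite A" "finite B" "A \<inter> B = {}"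
  shows "card (T \<inter> (A \<union> B)) = card (T \<inter> A) + card (T \<inter> B)"
proof -
  have "T \<inter> (A \<union> B) = (T \<inter> A) \<union> (T \<inter> B)" by auto
  with assms show ?thesis by (simp add: card_Un_disjoint disjoint_iff)
qed

lemma sum_subsets_overlapping_windows:
  fixes w :: "nat \<Rightarrow> 'b::comm_semiring_1"
  assumes fin: "finite A" "finite Q" "finite B"
    and disj: "A \<inter> Q = {}" "A \<inter> B = {}" "Q \<inter> B = {}"
  shows "(\<Sum>T | T \<subseteq> A \<union> Q \<union> B \<and> card (T \<inter> (A \<union> Q)) = j \<and> card (T \<inter> (Q \<union> B)) + 1 = j.
            w (card T))
    = (\<Sum>t<j. of_nat ((card A choose (j - t)) * (card Q choose t) * (card B choose (j - t - 1)))
              * w (2 * j - t - 1))"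
proof -
  let ?TT = "{T. T \<subseteq> A \<union> Q \<union> B \<and> card (T \<inter> (A \<union> Q)) = j \<and> card (T \<inter> (Q \<union> B)) + 1 = j}"
  have card_AQ: "card (T \<inter> (A \<union> Q)) = card (T \<inter> A) + card (T \<inter> Q)"
    and card_QB: "card (T \<inter> (Q \<union> B)) = card (T \<inter> Q) + card (T \<inter> B)" for T
    using card_Int_Un_disjoint fin disj by blast+
  have card_T: "card T = card (T \<inter> A) + card (T \<inter> Q) + card (T \<inter> B)" if "T \<subseteq> A \<union> Q \<union> B" for T
  proof -
    have "card T = card (T \<inter> (A \<union> Q \<union> B))" using that by (simp add: Int_absorb2)
    also have "\<dots> = card (T \<inter> (A \<union> Q)) + card (T \<inter> B)"
      using fin disj by (intro card_Int_Un_disjoint) auto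
    finally show ?thesis by (simp add: card_AQ)
  qed
  have fiber: "{T \<in> ?TT. card (T \<inter> Q) = t}
      = {T. T \<subseteq> A \<union> Q \<union> B \<and> card (T \<inter> A) = j - t \<and> card (T \<inter> Q) = t \<and> card (T \<inter> B) = j - t - 1}"
    if "t < j" for t
    using that by (auto simp: card_AQ card_QB)
  have "(\<Sum>T\<in>?TT. w (card T)) = (\<Sum>t<j. \<Sum>T\<in>{T \<in> ?TT. card (T \<inter> Q) = t}. w (card T))"
  proof (rule sum.group[symmetric])
    show "finite ?TT" using fin by (simp add: finite_subset)
    show "(\<lambda>T. card (T \<inter> Q)) ` ?TT \<subseteq> {..<j}" by (auto simp: card_QB)
  qed simp
  also have "\<dots> = (\<Sum>t<j. of_nat ((card A choose (j - t)) * (card Q choose t) * (card B choose (j - t - 1)))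
              * w (2 * j - t - 1))"
  proof (rule sum.cong[OF refl])
    fix t assume "t \<in> {..<j}"
    then have t: "t < j" by simp
    have "(\<Sum>T\<in>{T \<in> ?TT. card (T \<inter> Q) = t}. w (card T))
        = (\<Sum>T\<in>{T \<in> ?TT. card (T \<inter> Q) = t}. w (2 * j - t - 1))"
      using t by (intro sum.cong refl arg_cong[where f = w]) (auto simp: card_T card_AQ card_QB)
    also have "\<dots> = of_nat (card {T \<in> ?TT. card (T \<inter> Q) = t}) * w (2 * j - t - 1)"
      by simp
    finally show "(\<Sum>T\<in>{T \<in> ?TT. card (T \<inter> Q) = t}. w (card T))
        = of_nat ((card A choose (j - t)) * (card Q choose t) * (card B choose (j - t - 1)))
          * w (2 * j - t - 1)"
      unfolding fiber[OF t] card_subsets_card_Int3[OF fin disj] .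
  qed
  finally show ?thesis by simp
qed

definition phi :: "nat \<Rightarrow> nat \<Rightarrow> nat \<Rightarrow> real \<Rightarrow> real \<Rightarrow> real" where
  "phi k j m S P = (\<Sum>t<j. real ((m choose (j - t)) * ((k - m) choose t) * ((m - 1) choose (j - t - 1)))
      * (S ^ (2 * j - t - 1) * (1 - S) ^ (k + m - 1 - (2 * j - t - 1)))) * P ^ 2"

lemma phi_eq_int_sum:
  assumes m: "1 \<le> m" "m \<le> k"
  shows "phi k j m S P
    = (\<Sum>t\<in>{max 0 (int j - int m - 1) .. min (int k - int m) (int j - 1)}.
         binom_int (int m) (int j - t) * binom_int (int m - 1) (int j - t - 1)
         * binom_int (int k - int m) t
         * S powi (2 * int j - t - 1) * (1 - S) powi (int m - 2 * int j + t + int k)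
         * P ^ 2)"
    (is "_ = (\<Sum>t\<in>?I. ?F t)")
proof -
  have vanish: "?F t = 0" if "t < int j - int m \<or> int k - int m < t" for t
    using that by (auto simp: binom_int_def)
  have "(\<Sum>t\<in>?I. ?F t) = (\<Sum>t\<in>{0..<int j}. ?F t)"
  proof (rule sum.mono_neutral_left)
    show "\<forall>t\<in>{0..<int j} - ?I. ?F t = 0"
    proof
      fix t assume "t \<in> {0..<int j} - ?I"
      then have "t < int j - int m \<or> int k - int m < t" by auto
      then show "?F t = 0" by (rule vanish)
    qed
  qed auto
  also have "\<dots> = (\<Sum>t<j. ?F (int t))"
    by (simp add: image_int_atLeastLessThan[symmetric, of 0 j, simplified] sum.reindex lessThan_atLeast0)
  also have "\<dots> = phi k j m S P"
    unfolding phi_def sum_distrib_right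
  proof (rule sum.cong[OF refl])
    fix t assume "t \<in> {..<j}"
    then have t: "t < j" by simp
    show "?F (int t) = real ((m choose (j - t)) * ((k - m) choose t) * ((m - 1) choose (j - t - 1)))
        * (S ^ (2 * j - t - 1) * (1 - S) ^ (k + m - 1 - (2 * j - t - 1))) * P ^ 2"
    proof (cases "j - t \<le> m \<and> t \<le> k - m")
      case True
      have "2 * int j - int t - 1 = int (2 * j - t - 1)"
        and "int m - 2 * int j + int t + int k = int (k + m - 1 - (2 * j - t - 1))"
        using True t m by linarith+
      then have powers: "S powi (2 * int j - int t - 1) = S ^ (2 * j - t - 1)"
        "(1 - S) powi (int m - 2 * int j + int t + int k) = (1 - S) ^ (k + m - 1 - (2 * j - t - 1))"
        by (simp_all only: power_int_of_nat)
      have "nat (int j - int t) = j - t" "nat (int j - int t - 1) = j - t - 1"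
        "nat (int m - 1) = m - 1" "nat (int k - int m) = k - m"
        using t m by auto
      then show ?thesis
        unfolding powers using t m by (simp add: binom_int_def)
    next
      case False
      then have "int t < int j - int m \<or> int k - int m < int t"
        using t m by linarith
      then have "?F (int t) = 0" by (rule vanish)
      moreover have "(m choose (j - t)) * ((k - m) choose t) * ((m - 1) choose (j - t - 1)) = 0"
        using False by auto
      ultimately show ?thesis by (metis mult_zero_left of_nat_0)
    qed
  qed
  finally show ?thesis ..
qed

lemma phi_adjacent:
  assumes "1 \<le> k"
  shows "phi k j 1 S P = binom_int (int k - 1) (int j - 1) * S ^ j * (1 - S) ^ (k - j) * P ^ 2"
proof (cases j)
  case 0
  then show ?thesis by (simp add: phi_def binom_int_def)
next
  case (Suc i)
  let ?f = "\<lambda>t. real ((1 choose (j - t)) * ((k - 1) choose t) * (0 choose (j - t - 1)))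
            * (S ^ (2 * j - t - 1) * (1 - S) ^ (k - (2 * j - t - 1)))"
  have "(\<Sum>t<i. ?f t) = 0"
    using Suc by (intro sum.neutral) auto
  then have "(\<Sum>t<j. ?f t) = ?f i"
    using Suc by simp
  also have "\<dots> = real ((k - 1) choose i) * S ^ j * (1 - S) ^ (k - j)"
    using Suc by (simp add: mult_2)
  also have "real ((k - 1) choose i) = binom_int (int k - 1) (int j - 1)"
    using Suc assms by (simp add: binom_int_def nat_diff_distrib)
  finally show ?thesis
    by (simp add: phi_def)
qed

lemma (in prob_space) expectation_zero_one_eq_prob:
  assumes "\<And>\<omega>. \<omega> \<in> space M \<Longrightarrow> f \<omega> = 0 \<or> f \<omega> = 1"
  shows "expectation f = prob {\<omega> \<in> space M. f \<omega> = 1}"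
proof -
  have "expectation f = expectation (indicator {\<omega> \<in> space M. f \<omega> = 1})"
    using assms by (intro Bochner_Integration.integral_cong) (auto simp: indicator_def)
  also have "\<dots> = prob ({\<omega> \<in> space M. f \<omega> = 1} \<inter> space M)"
    by (rule Bochner_Integration.integral_indicator)
  finally show ?thesis
    by (simp add: Int_absorb2)
qed

lemma (in prob_space) expectation_xi:
  "expectation (xi X k j i0 a) = prob {\<omega> \<in> space M. xi X k j i0 a \<omega> = 1}"
  by (rule expectation_zero_one_eq_prob) (simp add: xi_def)

lemma (in prob_space) expectation_xi_xi:
  "expectation (\<lambda>\<omega>. xi X k j i0 a \<omega> * xi X k j i0 b \<omega>)
    = prob {\<omega> \<in> space M. xi X k j i0 a \<omega> = 1 \<and> xi X k j i0 b \<omega> = 1}"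
proof -
  have "expectation (\<lambda>\<omega>. xi X k j i0 a \<omega> * xi X k j i0 b \<omega>)
      = prob {\<omega> \<in> space M. xi X k j i0 a \<omega> * xi X k j i0 b \<omega> = 1}"
    by (rule expectation_zero_one_eq_prob) (simp add: xi_def)
  also have "{\<omega> \<in> space M. xi X k j i0 a \<omega> * xi X k j i0 b \<omega> = 1}
      = {\<omega> \<in> space M. xi X k j i0 a \<omega> = 1 \<and> xi X k j i0 b \<omega> = 1}"
    by (auto simp: xi_def)
  finally show ?thesis .
qed

locale iid_nat_sequence = prob_space +
  fixes X :: "nat \<Rightarrow> 'a \<Rightarrow> nat" and p :: "nat \<Rightarrow> real"
  assumes indep: "indep_vars (\<lambda>_. count_space UNIV) X {1..}"
    and distr: "\<And>i l. 1 \<le> i \<Longrightarrow> 1 \<le> l \<Longrightarrow> prob {\<omega> \<in> space M. X i \<omega> = l} = p l"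
begin

lemma events_X:
  assumes "1 \<le> l"
  shows "{\<omega> \<in> space M. P (X l \<omega>)} \<in> events"
proof -
  have "X l \<in> measurable M (count_space UNIV)"
    using indep assms by (auto simp: indep_vars_def)
  from measurable_sets[OF this, of "Collect P"] show ?thesis
    by (simp add: vimage_def Int_def conj_commute)
qed

lemma prob_X_ge:
  assumes "1 \<le> i0" "1 \<le> l"
  shows "prob {\<omega> \<in> space M. i0 \<le> X l \<omega>} = tailS p i0"
proof -
  let ?A = "\<lambda>s. {\<omega> \<in> space M. X l \<omega> = s + i0}"
  have "(\<lambda>s. prob (?A s)) sums prob (\<Union>s. ?A s)"
    using assms by (intro finite_measure_UNION) (auto simp: disjoint_family_on_def intro: events_X)
  moreover have "(\<Union>s. ?A s) = {\<omega> \<in> space M. i0 \<le> X l \<omega>}"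
    by auto (metis le_add_diff_inverse2)
  moreover have "prob (?A s) = p (s + i0)" for s
    using distr assms by simp
  ultimately show ?thesis
    by (simp add: tailS_def sums_iff)
qed

lemma prob_X_less:
  assumes "1 \<le> i0" "1 \<le> l"
  shows "prob {\<omega> \<in> space M. X l \<omega> < i0} = 1 - tailS p i0"
proof -
  have "{\<omega> \<in> space M. X l \<omega> < i0} = space M - {\<omega> \<in> space M. i0 \<le> X l \<omega>}"
    by auto
  then show ?thesis
    using prob_compl[OF events_X] prob_X_ge assms by simp
qed

lemma prob_exceedance_pattern:
  assumes i0: "1 \<le> i0" and fin: "finite U" "finite V" and disj: "U \<inter> V = {}"
    and pos: "U \<union> V \<subseteq> {1..}" and T: "T \<subseteq> U"
  shows "prob {\<omega> \<in> space M. (\<forall>l\<in>U. l \<in> T \<longleftrightarrow> i0 \<le> X l \<omega>) \<and> (\<forall>v\<in>V. X v \<omega> = i0)}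
    = tailS p i0 ^ card T * (1 - tailS p i0) ^ (card U - card T) * p i0 ^ card V"
proof (cases "U \<union> V = {}")
  case True
  then show ?thesis
    using T by (simp add: prob_space)
next
  case False
  define B where "B l = (if l \<in> T then {i0..} else if l \<in> U then {..<i0} else {i0})" for l
  have "{\<omega> \<in> space M. (\<forall>l\<in>U. l \<in> T \<longleftrightarrow> i0 \<le> X l \<omega>) \<and> (\<forall>v\<in>V. X v \<omega> = i0)}
      = (\<Inter>l\<in>U \<union> V. X l -` B l \<inter> space M)"
  proof -
    have "(\<forall>l\<in>U. l \<in> T \<longleftrightarrow> i0 \<le> X l \<omega>) \<and> (\<forall>v\<in>V. X v \<omega> = i0) \<longleftrightarrow> (\<forall>l\<in>U \<union> V. X l \<omega> \<in> B l)"
      for \<omega>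
      using T disj by (auto simp: B_def not_le)
    then show ?thesis
      using False by auto
  qed
  also have "prob \<dots> = (\<Prod>l\<in>U \<union> V. prob (X l -` B l \<inter> space M))"
    using False fin pos by (intro indep_varsD[OF indep]) auto
  also have "\<dots> = (\<Prod>l\<in>T. prob (X l -` B l \<inter> space M)) * (\<Prod>l\<in>U - T. prob (X l -` B l \<inter> space M))
      * (\<Prod>l\<in>V. prob (X l -` B l \<inter> space M))"
    by (simp only: prod.union_disjoint[OF fin disj] prod.subset_diff[OF T fin(1)] mult.commute)
  also have "\<dots> = tailS p i0 ^ card T * (1 - tailS p i0) ^ card (U - T) * p i0 ^ card V"
  proof -
    have l_pos: "1 \<le> l" if "l \<in> U \<union> V" for l
      using that pos by auto
    have "(\<Prod>l\<in>T. prob (X l -` B l \<inter> space M)) = (\<Prod>l\<in>T. tailS p i0)"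
    proof (rule prod.cong[OF refl])
      fix l assume "l \<in> T"
      then have "X l -` B l \<inter> space M = {\<omega> \<in> space M. i0 \<le> X l \<omega>}" "1 \<le> l"
        using T l_pos by (auto simp: B_def)
      then show "prob (X l -` B l \<inter> space M) = tailS p i0"
        using prob_X_ge[OF i0] by simp
    qed
    moreover have "(\<Prod>l\<in>U - T. prob (X l -` B l \<inter> space M)) = (\<Prod>l\<in>U - T. 1 - tailS p i0)"
    proof (rule prod.cong[OF refl])
      fix l assume "l \<in> U - T"
      then have "X l -` B l \<inter> space M = {\<omega> \<in> space M. X l \<omega> < i0}" "1 \<le> l"
        using l_pos by (auto simp: B_def)
      then show "prob (X l -` B l \<inter> space M) = 1 - tailS p i0"
        using prob_X_less[OF i0] by simp
    qed
    moreover have "(\<Prod>l\<in>V. prob (X l -` B l \<inter> space M)) = (\<Prod>l\<in>V. p i0)"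
    proof (rule prod.cong[OF refl])
      fix l assume "l \<in> V"
      then have "X l -` B l \<inter> space M = {\<omega> \<in> space M. X l \<omega> = i0}" "1 \<le> l"
        using T disj l_pos by (auto simp: B_def)
      then show "prob (X l -` B l \<inter> space M) = p i0"
        using distr i0 by simp
    qed
    ultimately show ?thesis by simp
  qed
  finally show ?thesis
    using fin T by (simp add: card_Diff_subset finite_subset)
qed

lemma prob_exceedance_set:
  assumes i0: "1 \<le> i0" and fin: "finite U" "finite V" and disj: "U \<inter> V = {}"
    and pos: "U \<union> V \<subseteq> {1..}"
  shows "prob {\<omega> \<in> space M. P {l \<in> U. i0 \<le> X l \<omega>} \<and> (\<forall>v\<in>V. X v \<omega> = i0)}
    = (\<Sum>T | T \<subseteq> U \<and> P T. tailS p i0 ^ card T * (1 - tailS p i0) ^ (card U - card T)) * p i0 ^ card V"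
proof -
  define F where "F T = {\<omega> \<in> space M. (\<forall>l\<in>U. l \<in> T \<longleftrightarrow> i0 \<le> X l \<omega>) \<and> (\<forall>v\<in>V. X v \<omega> = i0)}" for T
  let ?TT = "{T. T \<subseteq> U \<and> P T}"
  have F_events: "F T \<in> events" for T
    unfolding F_def using fin pos
    by (intro sets.sets_Collect_conj sets.sets_Collect_finite_All events_X) auto
  have F_disjoint: "disjoint_family_on F ?TT"
    by (auto simp: disjoint_family_on_def F_def)
  have E_eq: "{\<omega> \<in> space M. P {l \<in> U. i0 \<le> X l \<omega>} \<and> (\<forall>v\<in>V. X v \<omega> = i0)} = (\<Union>T\<in>?TT. F T)"
  proof (intro equalityI subsetI)
    fix \<omega> assume "\<omega> \<in> {\<omega> \<in> space M. P {l \<in> U. i0 \<le> X l \<omega>} \<and> (\<forall>v\<in>V. X v \<omega> = i0)}"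
    then show "\<omega> \<in> (\<Union>T\<in>?TT. F T)"
      by (intro UN_I[of "{l \<in> U. i0 \<le> X l \<omega>}"]) (auto simp: F_def)
  next
    fix \<omega> assume "\<omega> \<in> (\<Union>T\<in>?TT. F T)"
    then obtain T where "T \<subseteq> U" "P T" "\<omega> \<in> F T" by auto
    moreover from this have "{l \<in> U. i0 \<le> X l \<omega>} = T" by (auto simp: F_def)
    ultimately show "\<omega> \<in> {\<omega> \<in> space M. P {l \<in> U. i0 \<le> X l \<omega>} \<and> (\<forall>v\<in>V. X v \<omega> = i0)}"
      by (auto simp: F_def)
  qed
  have TT_finite: "finite ?TT"
    using fin by simp
  have "prob (\<Union>T\<in>?TT. F T) = (\<Sum>T\<in>?TT. prob (F T))"
    using TT_finite F_events F_disjoint by (intro finite_measure_finite_Union) auto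
  also have "\<dots> = (\<Sum>T\<in>?TT. tailS p i0 ^ card T * (1 - tailS p i0) ^ (card U - card T) * p i0 ^ card V)"
    unfolding F_def by (intro sum.cong refl) (auto intro: prob_exceedance_pattern[OF assms])
  finally show ?thesis
    unfolding E_eq by (simp add: sum_distrib_right)
qed

lemma prob_xi:
  assumes i0: "1 \<le> i0" and "1 \<le> a"
  shows "prob {\<omega> \<in> space M. xi X k j i0 a \<omega> = 1}
    = real (k choose j) * tailS p i0 ^ j * (1 - tailS p i0) ^ (k - j) * p i0"
proof -
  have event: "{\<omega> \<in> space M. xi X k j i0 a \<omega> = 1}
      = {\<omega> \<in> space M. card {l \<in> {a..<a + k}. i0 \<le> X l \<omega>} = j \<and> (\<forall>v\<in>{a + k}. X v \<omega> = i0)}"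
    by (auto simp: xi_def)
  have setting: "finite {a..<a + k}" "finite {a + k}" "{a..<a + k} \<inter> {a + k} = {}"
    "{a..<a + k} \<union> {a + k} \<subseteq> {1..}"
    using \<open>1 \<le> a\<close> by auto
  have "prob {\<omega> \<in> space M. xi X k j i0 a \<omega> = 1}
      = (\<Sum>T | T \<subseteq> {a..<a + k} \<and> card T = j. tailS p i0 ^ j * (1 - tailS p i0) ^ (k - j)) * p i0"
    unfolding event prob_exceedance_set[OF i0 setting, of "\<lambda>T. card T = j"] by simp
  then show ?thesis
    by (simp add: n_subsets)
qed

lemma prob_xi_xi_disjoint_windows:
  assumes i0: "1 \<le> i0" and "1 \<le> a" "1 \<le> b" "k < \<bar>int a - int b\<bar>"
  shows "prob {\<omega> \<in> space M. xi X k j i0 a \<omega> = 1 \<and> xi X k j i0 b \<omega> = 1}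
    = prob {\<omega> \<in> space M. xi X k j i0 a \<omega> = 1} * prob {\<omega> \<in> space M. xi X k j i0 b \<omega> = 1}"
  using assms(2-4)
proof (induction a b rule: linorder_wlog)
  case (sym a b)
  then show ?case
    by (simp add: conj_commute mult.commute abs_minus_commute)
next
  case (le a b)
  then have a: "1 \<le> a" and b: "1 \<le> b" and far: "k < b - a"
    by auto
  define W1 W2 where "W1 = {a..<a + k}" and "W2 = {b..<b + k}"
  have W_disj: "W1 \<inter> W2 = {}"
    using far by (auto simp: W1_def W2_def)
  have event: "{\<omega> \<in> space M. xi X k j i0 a \<omega> = 1 \<and> xi X k j i0 b \<omega> = 1}
      = {\<omega> \<in> space M. (card ({l \<in> W1 \<union> W2. i0 \<le> X l \<omega>} \<inter> W1) = j
           \<and> card ({l \<in> W1 \<union> W2. i0 \<le> X l \<omega>} \<inter> W2) = j) \<and> (\<forall>v\<in>{a + k, b + k}. X v \<omega> = i0)}"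
  proof -
    have "{l \<in> W1 \<union> W2. i0 \<le> X l \<omega>} \<inter> W1 = {l \<in> W1. i0 \<le> X l \<omega>}"
      "{l \<in> W1 \<union> W2. i0 \<le> X l \<omega>} \<inter> W2 = {l \<in> W2. i0 \<le> X l \<omega>}" for \<omega>
      by auto
    then show ?thesis
      by (auto simp: xi_def W1_def W2_def)
  qed
  have setting: "finite (W1 \<union> W2)" "finite {a + k, b + k}" "(W1 \<union> W2) \<inter> {a + k, b + k} = {}"
    "(W1 \<union> W2) \<union> {a + k, b + k} \<subseteq> {1..}"
    using a le far by (auto simp: W1_def W2_def)
  have "card T = 2 * j" if "T \<subseteq> W1 \<union> W2" "card (T \<inter> W1) = j" "card (T \<inter> W2) = j" for T
    using that card_Int_Un_disjoint[OF _ _ W_disj, of T] by (simp add: W1_def W2_def Int_absorb2)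
  moreover have "card {T. T \<subseteq> W1 \<union> W2 \<and> card (T \<inter> W1) = j \<and> card (T \<inter> W2) = j} = (k choose j) ^ 2"
    using card_subsets_Un_disjoint[OF W_disj, of "\<lambda>T. card T = j" "\<lambda>T. card T = j"]
    by (simp add: n_subsets W1_def W2_def power2_eq_square)
  moreover have "card (W1 \<union> W2) = 2 * k" "card {a + k, b + k} = 2"
    using W_disj le far by (simp_all add: card_Un_disjoint W1_def W2_def)
  ultimately have "prob {\<omega> \<in> space M. xi X k j i0 a \<omega> = 1 \<and> xi X k j i0 b \<omega> = 1}
      = real ((k choose j) ^ 2) * tailS p i0 ^ (2 * j) * (1 - tailS p i0) ^ (2 * k - 2 * j) * p i0 ^ 2"
    unfolding event prob_exceedance_set[OF i0 setting, of "\<lambda>T. card (T \<inter> W1) = j \<and> card (T \<inter> W2) = j"]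
    by simp
  also have "\<dots> = (real (k choose j) * tailS p i0 ^ j * (1 - tailS p i0) ^ (k - j) * p i0) ^ 2"
  proof -
    have "2 * k - 2 * j = (k - j) * 2" "2 * j = j * 2"
      by simp_all
    then show ?thesis
      by (simp only:) (simp add: power_mult power_mult_distrib)
  qed
  finally show ?case
    using prob_xi[OF i0 a] prob_xi[OF i0 b] by (simp add: power2_eq_square)
qed

lemma prob_xi_xi_overlapping_windows:
  assumes i0: "1 \<le> i0" and "1 \<le> a" "1 \<le> b" "\<bar>int a - int b\<bar> = int m"
    and m: "1 \<le> m" "m \<le> k"
  shows "prob {\<omega> \<in> space M. xi X k j i0 a \<omega> = 1 \<and> xi X k j i0 b \<omega> = 1}
    = phi k j m (tailS p i0) (p i0)"
  using assms(2-4)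
proof (induction a b rule: linorder_wlog)
  case (sym a b)
  then show ?case
    by (simp add: conj_commute abs_minus_commute)
next
  case (le a b)
  then have a: "1 \<le> a" and b: "b = a + m"
    by auto
  define A Q B where "A = {a..<a + m}" and "Q = {a + m..<a + k}" and "B = {a + k + 1..<a + m + k}"
  have fin: "finite A" "finite Q" "finite B"
    by (simp_all add: A_def Q_def B_def)
  have disj: "A \<inter> Q = {}" "A \<inter> B = {}" "Q \<inter> B = {}"
    using m by (auto simp: A_def Q_def B_def)
  have windows: "{a..<a + k} = A \<union> Q" "{a + m..<a + m + k} = insert (a + k) (Q \<union> B)" "a + k \<notin> Q \<union> B"
    using m by (auto simp: A_def Q_def B_def)
  let ?T = "\<lambda>\<omega>. {l \<in> A \<union> Q \<union> B. i0 \<le> X l \<omega>}"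
  have event: "{\<omega> \<in> space M. xi X k j i0 a \<omega> = 1 \<and> xi X k j i0 b \<omega> = 1}
      = {\<omega> \<in> space M. (card (?T \<omega> \<inter> (A \<union> Q)) = j \<and> card (?T \<omega> \<inter> (Q \<union> B)) + 1 = j)
           \<and> (\<forall>v\<in>{a + k, a + m + k}. X v \<omega> = i0)}"
  proof -
    have "?T \<omega> \<inter> (A \<union> Q) = {l \<in> {a..<a + k}. i0 \<le> X l \<omega>}" for \<omega>
      using windows by auto
    moreover have "card {l \<in> {a + m..<a + m + k}. i0 \<le> X l \<omega>} = card (?T \<omega> \<inter> (Q \<union> B)) + 1"
      if "X (a + k) \<omega> = i0" for \<omega>
    proof -
      have "{l \<in> {a + m..<a + m + k}. i0 \<le> X l \<omega>} = insert (a + k) (?T \<omega> \<inter> (Q \<union> B))"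
        using that windows by auto
      then show ?thesis
        using windows fin by simp
    qed
    ultimately show ?thesis
      using b by (auto simp: xi_def)
  qed
  have setting: "finite (A \<union> Q \<union> B)" "finite {a + k, a + m + k}"
    "(A \<union> Q \<union> B) \<inter> {a + k, a + m + k} = {}" "(A \<union> Q \<union> B) \<union> {a + k, a + m + k} \<subseteq> {1..}"
    using fin a m by (auto simp: A_def Q_def B_def)
  have cards: "card A = m" "card Q = k - m" "card B = m - 1" "card (A \<union> Q \<union> B) = k + m - 1"
    "card {a + k, a + m + k} = 2"
    using m fin disj by (simp_all add: A_def Q_def B_def card_Un_disjoint Int_Un_distrib2)
  have "prob {\<omega> \<in> space M. xi X k j i0 a \<omega> = 1 \<and> xi X k j i0 b \<omega> = 1}
      = (\<Sum>T | T \<subseteq> A \<union> Q \<union> B \<and> card (T \<inter> (A \<union> Q)) = j \<and> card (T \<inter> (Q \<union> B)) + 1 = j.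
           tailS p i0 ^ card T * (1 - tailS p i0) ^ (k + m - 1 - card T)) * p i0 ^ 2"
    unfolding event prob_exceedance_set[OF i0 setting,
        of "\<lambda>T. card (T \<inter> (A \<union> Q)) = j \<and> card (T \<inter> (Q \<union> B)) + 1 = j"] cards ..
  also have "\<dots> = phi k j m (tailS p i0) (p i0)"
    unfolding sum_subsets_overlapping_windows[OF fin disj,
        where w = "\<lambda>c. tailS p i0 ^ c * (1 - tailS p i0) ^ (k + m - 1 - c)"] cards phi_def ..
  finally show ?case .
qed

end

theorem theorem4:
  fixes M :: "'a measure" and X :: "nat \<Rightarrow> 'a \<Rightarrow> nat" and p :: "nat \<Rightarrow> real"
    and k j i0 :: nat
  assumes "prob_space M"
    and indep: "prob_space.indep_vars M (\<lambda>_. count_space UNIV) X {1..}"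
    and pos: "\<And>i. i \<ge> 1 \<Longrightarrow> AE \<omega> in M. X i \<omega> \<ge> 1"
    and distr: "\<And>i l. i \<ge> 1 \<Longrightarrow> l \<ge> 1 \<Longrightarrow> measure M {\<omega> \<in> space M. X i \<omega> = l} = p l"
    and "k \<ge> 1" and "j \<le> k" and "i0 \<ge> 1"
  defines "S \<equiv> tailS p i0"
  shows
    "(\<forall>i\<ge>1. prob_space.expectation M (xi X k j i0 i)
              = measure M {\<omega> \<in> space M. xi X k j i0 i \<omega> = 1}
           \<and> measure M {\<omega> \<in> space M. xi X k j i0 i \<omega> = 1}
              = real (k choose j) * S ^ j * (1 - S) ^ (k - j) * p i0)
   \<and> (\<forall>i\<ge>1. prob_space.expectation M (\<lambda>\<omega>. xi X k j i0 i \<omega> * xi X k j i0 (i + 1) \<omega>)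
              = binom_int (int k - 1) (int j - 1) * S ^ j * (1 - S) ^ (k - j) * p i0 ^ 2)
   \<and> (\<forall>i1 i2 m. i1 \<ge> 1 \<longrightarrow> i2 \<ge> 1 \<longrightarrow> \<bar>int i1 - int i2\<bar> = int m \<longrightarrow> m > k \<longrightarrow>
          measure M {\<omega> \<in> space M. xi X k j i0 i1 \<omega> = 1 \<and> xi X k j i0 i2 \<omega> = 1}
            = measure M {\<omega> \<in> space M. xi X k j i0 i1 \<omega> = 1}
              * measure M {\<omega> \<in> space M. xi X k j i0 i2 \<omega> = 1}
        \<and> prob_space.expectation M (\<lambda>\<omega>. xi X k j i0 i1 \<omega> * xi X k j i0 i2 \<omega>)
            = prob_space.expectation M (xi X k j i0 i1) * prob_space.expectation M (xi X k j i0 i2))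
   \<and> (\<forall>i1 i2 m. i1 \<ge> 1 \<longrightarrow> i2 \<ge> 1 \<longrightarrow> \<bar>int i1 - int i2\<bar> = int m \<longrightarrow> 1 \<le> m \<longrightarrow> m \<le> k \<longrightarrow>
          prob_space.expectation M (\<lambda>\<omega>. xi X k j i0 i1 \<omega> * xi X k j i0 i2 \<omega>)
            = (\<Sum>t\<in>{max 0 (int j - int m - 1) .. min (int k - int m) (int j - 1)}.
                 binom_int (int m) (int j - t) * binom_int (int m - 1) (int j - t - 1)
                 * binom_int (int k - int m) t
                 * S powi (2 * int j - t - 1) * (1 - S) powi (int m - 2 * int j + t + int k)
                 * p i0 ^ 2))"
proof -
  (* The hypotheses pos and j \<le> k are not needed: only values \<ge> i0 \<ge> 1 are inspected, and for
     j > k both sides of every identity vanish. *)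
  interpret iid_nat_sequence M X p
    using assms(1) indep distr by (simp add: iid_nat_sequence_def iid_nat_sequence_axioms_def)
  note i0 = \<open>i0 \<ge> 1\<close> and k = \<open>k \<ge> 1\<close>
  show ?thesis
    unfolding S_def expectation_xi expectation_xi_xi conj_absorb
  proof (intro conjI allI impI refl)
    fix i :: nat assume i: "1 \<le> i"
    show "prob {\<omega> \<in> space M. xi X k j i0 i \<omega> = 1}
        = real (k choose j) * tailS p i0 ^ j * (1 - tailS p i0) ^ (k - j) * p i0"
      by (rule prob_xi[OF i0 i])
    have "\<bar>int i - int (i + 1)\<bar> = int 1" by simp
    from prob_xi_xi_overlapping_windows[OF i0 i _ this order.refl k, of j]
    show "prob {\<omega> \<in> space M. xi X k j i0 i \<omega> = 1 \<and> xi X k j i0 (i + 1) \<omega> = 1}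
        = binom_int (int k - 1) (int j - 1) * tailS p i0 ^ j * (1 - tailS p i0) ^ (k - j) * p i0 ^ 2"
      unfolding phi_adjacent[OF k] by simp
  next
    fix i1 i2 m :: nat assume "1 \<le> i1" "1 \<le> i2" "\<bar>int i1 - int i2\<bar> = int m" "k < m"
    then show "prob {\<omega> \<in> space M. xi X k j i0 i1 \<omega> = 1 \<and> xi X k j i0 i2 \<omega> = 1}
        = prob {\<omega> \<in> space M. xi X k j i0 i1 \<omega> = 1} * prob {\<omega> \<in> space M. xi X k j i0 i2 \<omega> = 1}"
      using prob_xi_xi_disjoint_windows[OF i0] by simp
  next
    fix i1 i2 m :: nat assume "1 \<le> i1" "1 \<le> i2" "\<bar>int i1 - int i2\<bar> = int m" "1 \<le> m" "m \<le> k"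
    then show "prob {\<omega> \<in> space M. xi X k j i0 i1 \<omega> = 1 \<and> xi X k j i0 i2 \<omega> = 1}
        = (\<Sum>t\<in>{max 0 (int j - int m - 1) .. min (int k - int m) (int j - 1)}.
             binom_int (int m) (int j - t) * binom_int (int m - 1) (int j - t - 1)
             * binom_int (int k - int m) t
             * tailS p i0 powi (2 * int j - t - 1) * (1 - tailS p i0) powi (int m - 2 * int j + t + int k)
             * p i0 ^ 2)"
      using prob_xi_xi_overlapping_windows[OF i0] phi_eq_int_sum by simp
  qed
qed

end
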